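(* Let $n\ge0$ and $k,m\ge1$ be integers, and let $r_0<r_1<\dots<r_{k-1}$ and $s_0<s_1<\dots<s_{k-1}$ be integers in $\{1,\dots,k+m\}$. Let $\bar r_0<\dots<\bar r_{m-1}$ and $\bar s_0<\dots<\bar s_{m-1}$ be the elements of $\{1,\dots,k+m\}\setminus\{r_0,\dots,r_{k-1}\}$ and $\{1,\dots,k+m\}\setminus\{s_0,\dots,s_{k-1}\}$ respectively. Then $$\det\Big(C_{2n}^{(2k+2m-1)}(2r_i-2\to2s_j-2)\Big)_{0\le i,j\le k-1}=(-1)^{\sum_{i=0}^{m-1}(\bar r_i+\bar s_i)}\det\Big(C_{-2n}^{(2k+2m-1)}(2\bar r_i-2\to2\bar s_j-2)\Big)_{0\le i,j\le m-1}.$$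
   Context: For $N\ge0$ and $0\le r,s\le K$, $C_N^{(K)}(r\to s)$ is the number of lattice paths with steps $(1,1),(1,-1)$ from $(0,r)$ to $(N,s)$ never below the $x$-axis nor above $y=K$. For odd $K$, $F(x)=\sum_{N\ge0}C_N^{(K)}(r\to s)x^N$ is a rational function $p/q$ with $\deg p<\deg q$, $q(0)\ne0$, and for negative $N$ one defines $C_N^{(K)}(r\to s)$ by $\sum_{N\ge1}C_{-N}^{(K)}(r\to s)x^N=-F(1/x)$ (equivalently by running the linear recurrence backwards). *)

theory Defs
  imports Main "Jordan_Normal_Form.Determinant"
begin

text \<open>Lattice paths with steps (1,1),(1,-1) from (0,r) to (N,s), staying in the strip
  0 <= y <= K, encoded by the list of their heights at x = 0, ..., N.\<close>
definition strip_paths :: "int \<Rightarrow> nat \<Rightarrow> int \<Rightarrow> int \<Rightarrow> int list set" where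
  "strip_paths K N r s = {xs. length xs = Suc N \<and> xs ! 0 = r \<and> xs ! N = s
      \<and> (\<forall>i<N. \<bar>xs ! Suc i - xs ! i\<bar> = 1)
      \<and> (\<forall>i\<le>N. 0 \<le> xs ! i \<and> xs ! i \<le> K)}"

definition C_nonneg :: "int \<Rightarrow> nat \<Rightarrow> int \<Rightarrow> int \<Rightarrow> int" where
  "C_nonneg K N r s = int (card (strip_paths K N r s))"

text \<open>A two-sided integer sequence satisfies a linear recurrence with constant coefficients
  a_0, ..., a_d, where a_0 and a_d are nonzero (so it can be run forwards and backwards).\<close>
definition satisfies_lin_rec :: "(int \<Rightarrow> int) \<Rightarrow> bool" where
  "satisfies_lin_rec c \<longleftrightarrow> (\<exists>(d::nat) (a::nat \<Rightarrow> int). a 0 \<noteq> 0 \<and> a d \<noteq> 0 \<and>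
      (\<forall>N::int. (\<Sum>i\<le>d. a i * c (N + int i)) = 0))"

text \<open>C_N^{(K)}(r -> s) for all integers N: for N >= 0 the path count; for N < 0 the value
  obtained by running the linear recurrence of the sequence backwards, i.e. the unique
  two-sided extension of the path-count sequence satisfying a linear recurrence.\<close>
definition C :: "int \<Rightarrow> int \<Rightarrow> int \<Rightarrow> int \<Rightarrow> int" where
  "C K N r s = (if 0 \<le> N then C_nonneg K (nat N) r s
     else (THE c. (\<forall>M\<ge>0. c M = C_nonneg K (nat M) r s) \<and> satisfies_lin_rec c) N)"

end

theory Submission
  imports Defs
begin

text \<open>
  For \<open>K = 2L - 1\<close> the path counts \<open>C\<^sub>N\<close> are the entries of \<open>A\<^sup>N\<close>, where \<open>A\<close> is the
  adjacency matrix of the path on \<open>D = 2L\<close> vertices (heights \<open>0, \<dots>, K\<close>). The Chebyshev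
  polynomial \<open>U\<^sub>D\<close>, the characteristic polynomial of that path, annihilates \<open>A\<close> and has
  constant term \<open>\<plusminus>1\<close> since \<open>D\<close> is even. Hence \<open>A\<close> is invertible, the entries of
  \<open>A\<^sup>N\<close> for all \<open>N \<in> \<int>\<close> satisfy the recurrence with characteristic polynomial
  \<open>U\<^sub>D\<close>, and by uniqueness of the backward extension \<open>C\<^sub>-\<^sub>N\<close> is given by
  the entries of \<open>A\<^sup>-\<^sup>N\<close>.

  Since \<open>A\<^sup>2\<^sup>n\<close> preserves the parity of heights, its block \<open>M\<close> on the even heights
  \<open>2r - 2\<close> is inverted by the corresponding block \<open>N\<close> of \<open>A\<^sup>-\<^sup>2\<^sup>n\<close>; moreover \<open>N\<close> is
  symmetric and \<open>det M = 1\<close>, as the even block of \<open>A\<^sup>2\<close> is \<open>B B\<^sup>T\<close> for a unitriangular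
  \<open>B\<close>. The theorem is then Jacobi's complementary minor identity
  \<open>det M[r, s] = \<plusminus> det M \<cdot> det N[s\<^sup>c, r\<^sup>c]\<close>.
\<close>

section \<open>Powers of a matrix and polynomials in a matrix\<close>

lemma pow_mat_Suc_left:
  assumes "A \<in> carrier_mat n n"
  shows "A ^\<^sub>m Suc k = A * A ^\<^sub>m k"
proof (induction k)
  case (Suc k)
  have "A ^\<^sub>m Suc (Suc k) = (A * A ^\<^sub>m k) * A" using Suc by simp
  also have "\<dots> = A * (A ^\<^sub>m k * A)"
    using assms by (simp add: assoc_mult_mat[of _ n n _ n _ n] mult_carrier_mat[of _ n n _ n])
  finally show ?case by simp
qed (use assms in auto)

lemma pow_mat_add:
  assumes "A \<in> carrier_mat n n"
  shows "A ^\<^sub>m (a + b) = A ^\<^sub>m a * A ^\<^sub>m b"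
proof (induction b)
  case (Suc b)
  have "A ^\<^sub>m (a + Suc b) = (A ^\<^sub>m a * A ^\<^sub>m b) * A" using Suc by simp
  also have "\<dots> = A ^\<^sub>m a * (A ^\<^sub>m b * A)"
    using assms by (simp add: assoc_mult_mat[of _ n n _ n _ n] mult_carrier_mat[of _ n n _ n])
  finally show ?case by simp
qed (use assms in auto)

lemma pow_mat_mult:
  assumes "A \<in> carrier_mat n n"
  shows "A ^\<^sub>m (a * b) = (A ^\<^sub>m a) ^\<^sub>m b"
proof (induction b)
  case (Suc b)
  then show ?case using pow_mat_add[OF assms, of "a * b" a] by (simp add: add.commute)
qed (use assms in auto)

lemma pow_mat_commute:
  assumes "A \<in> carrier_mat n n" "X \<in> carrier_mat n n" "X * A = A * X"
  shows "X * A ^\<^sub>m k = A ^\<^sub>m k * X"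
proof (induction k)
  case (Suc k)
  have "X * A ^\<^sub>m Suc k = (X * A ^\<^sub>m k) * A"
    using assms by (simp del: assoc_mult_mat add: assoc_mult_mat[of _ n n _ n _ n, symmetric])
  also have "\<dots> = A ^\<^sub>m k * (X * A)"
    using Suc assms by (simp add: assoc_mult_mat[of _ n n _ n _ n] mult_carrier_mat[of _ n n _ n])
  also have "\<dots> = A ^\<^sub>m Suc k * X"
    using assms by (simp add: assoc_mult_mat[of _ n n _ n _ n] mult_carrier_mat[of _ n n _ n])
  finally show ?case .
qed (use assms in auto)

lemma pow_mat_inverse:
  assumes "A \<in> carrier_mat n n" "B \<in> carrier_mat n n" "A * B = 1\<^sub>m n"
  shows "A ^\<^sub>m k * B ^\<^sub>m k = 1\<^sub>m n"
proof (induction k)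
  case (Suc k)
  have "A ^\<^sub>m Suc k * B ^\<^sub>m Suc k = A * (A ^\<^sub>m k * B ^\<^sub>m k) * B"
    unfolding pow_mat_Suc_left[OF assms(1), of k] pow_mat.simps(2)[of B k]
    using assms
    by (simp del: pow_mat.simps
        add: assoc_mult_mat[of _ n n _ n _ n] mult_carrier_mat[of _ n n _ n])
  then show ?case using Suc assms by simp
qed (use assms in auto)

lemma pow_mat_cancel:
  assumes "A \<in> carrier_mat n n" "B \<in> carrier_mat n n" "B * A = 1\<^sub>m n"
  shows "B ^\<^sub>m p * A ^\<^sub>m i = (if i \<le> p then B ^\<^sub>m (p - i) else A ^\<^sub>m (i - p))"
proof (induction i arbitrary: p)
  case (Suc i)
  show ?case
  proof (cases p)
    case (Suc p')
    have "B ^\<^sub>m Suc p' * A ^\<^sub>m Suc i = B ^\<^sub>m p' * (B * A) * A ^\<^sub>m i"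
      unfolding pow_mat_Suc_left[OF assms(1), of i] pow_mat.simps(2)[of B p']
      using assms(1,2)
      by (simp del: pow_mat.simps
        add: assoc_mult_mat[of _ n n _ n _ n] mult_carrier_mat[of _ n n _ n])
    also have "\<dots> = B ^\<^sub>m p' * A ^\<^sub>m i" unfolding assms(3) using assms by simp
    finally show ?thesis using Suc.IH[of p'] Suc by simp
  qed (use assms in auto)
qed (use assms in auto)

lemma transpose_pow_mat:
  fixes A :: "'a :: comm_semiring_1 mat"
  assumes "A \<in> carrier_mat n n" "transpose_mat A = A"
  shows "transpose_mat (A ^\<^sub>m k) = A ^\<^sub>m k"
proof (induction k)
  case (Suc k)
  have "transpose_mat (A ^\<^sub>m Suc k) = transpose_mat A * transpose_mat (A ^\<^sub>m k)"
    using assms by (simp add: transpose_mult[of _ n n _ n])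
  also have "\<dots> = A ^\<^sub>m Suc k"
    using Suc assms pow_mat_Suc_left[OF assms(1), of k] by (simp del: pow_mat.simps)
  finally show ?case .
qed (use assms in auto)

lemma det_pow_mat:
  fixes A :: "'a :: comm_ring_1 mat"
  assumes "A \<in> carrier_mat n n"
  shows "det (A ^\<^sub>m k) = det A ^ k"
  by (induction k) (use assms in \<open>auto simp: det_mult[of _ n]\<close>)

definition mat_poly :: "(nat \<Rightarrow> 'a :: semiring_1) \<Rightarrow> nat \<Rightarrow> 'a mat \<Rightarrow> 'a mat" where
  "mat_poly c d A = mat (dim_row A) (dim_row A) (\<lambda>(x, y). \<Sum>i\<le>d. c i * (A ^\<^sub>m i) $$ (x, y))"

lemma dim_mat_poly [simp]:
  "dim_row (mat_poly c d A) = dim_row A" "dim_col (mat_poly c d A) = dim_row A"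
  by (simp_all add: mat_poly_def)

lemma mat_poly_carrier [simp]: "A \<in> carrier_mat n n \<Longrightarrow> mat_poly c d A \<in> carrier_mat n n"
  by (simp add: mat_poly_def)

lemma mult_mat_poly_index:
  fixes A X :: "'a :: comm_semiring_1 mat"
  assumes "A \<in> carrier_mat n n" "X \<in> carrier_mat n n" "x < n" "y < n"
  shows "(X * mat_poly c d A) $$ (x, y) = (\<Sum>i\<le>d. c i * (X * A ^\<^sub>m i) $$ (x, y))"
  using assms
  by (simp add: mat_poly_def scalar_prod_def sum_distrib_left mult.left_commute
      sum.swap[of _ "{..d}"])

lemma mat_poly_mult_index:
  fixes A X :: "'a :: comm_semiring_1 mat"
  assumes "A \<in> carrier_mat n n" "X \<in> carrier_mat n n" "x < n" "y < n"
  shows "(mat_poly c d A * X) $$ (x, y) = (\<Sum>i\<le>d. c i * (A ^\<^sub>m i * X) $$ (x, y))"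
  using assms
  by (simp add: mat_poly_def scalar_prod_def sum_distrib_left sum_distrib_right mult.assoc
      sum.swap[of _ "{..d}"])

lemma mat_poly_commute:
  fixes A X :: "'a :: comm_semiring_1 mat"
  assumes "A \<in> carrier_mat n n" "X \<in> carrier_mat n n" "X * A = A * X"
  shows "X * mat_poly c d A = mat_poly c d A * X"
proof (rule eq_matI)
  fix x y assume "x < dim_row (mat_poly c d A * X)" "y < dim_col (mat_poly c d A * X)"
  then have xy: "x < n" "y < n" using assms by auto
  have "(X * mat_poly c d A) $$ (x, y) = (\<Sum>i\<le>d. c i * (X * A ^\<^sub>m i) $$ (x, y))"
    by (rule mult_mat_poly_index[OF assms(1,2) xy])
  also have "\<dots> = (\<Sum>i\<le>d. c i * (A ^\<^sub>m i * X) $$ (x, y))"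
    using pow_mat_commute[OF assms] by simp
  also have "\<dots> = (mat_poly c d A * X) $$ (x, y)"
    by (rule mat_poly_mult_index[OF assms(1,2) xy, symmetric])
  finally show "(X * mat_poly c d A) $$ (x, y) = (mat_poly c d A * X) $$ (x, y)" .
qed (use assms in auto)

lemma transpose_mat_poly:
  fixes A :: "'a :: comm_semiring_1 mat"
  assumes "A \<in> carrier_mat n n" "transpose_mat A = A"
  shows "transpose_mat (mat_poly c d A) = mat_poly c d A"
proof -
  have "(A ^\<^sub>m i) $$ (y, x) = (A ^\<^sub>m i) $$ (x, y)" if "x < n" "y < n" for i x y
    using arg_cong[OF transpose_pow_mat[OF assms, of i], of "\<lambda>X. X $$ (x, y)"] that assms(1)
    by simp
  then show ?thesis
    using assms(1) by (intro eq_matI) (auto simp: mat_poly_def)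
qed

lemma mat_poly_inverse:
  fixes A :: "'a :: comm_ring_1 mat"
  assumes A: "A \<in> carrier_mat n n" and annihilates: "mat_poly c (Suc d) A = 0\<^sub>m n n"
    and u: "u * c 0 = -1"
  shows "A * mat_poly (\<lambda>i. u * c (Suc i)) d A = 1\<^sub>m n"
    and "mat_poly (\<lambda>i. u * c (Suc i)) d A * A = 1\<^sub>m n"
proof -
  let ?B = "mat_poly (\<lambda>i. u * c (Suc i)) d A"
  have key: "(\<Sum>i\<le>d. u * c (Suc i) * (A ^\<^sub>m Suc i) $$ (x, y)) = 1\<^sub>m n $$ (x, y)"
    if xy: "x < n" "y < n" for x y
  proof -
    let ?S = "\<Sum>i\<le>d. c (Suc i) * (A ^\<^sub>m Suc i) $$ (x, y)"
    have "c 0 * 1\<^sub>m n $$ (x, y) + ?S = 0"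
      using arg_cong[OF annihilates, of "\<lambda>M. M $$ (x, y)"] A xy
      by (simp add: mat_poly_def sum.atMost_Suc_shift del: sum.atMost_Suc pow_mat.simps(2))
    then have "?S = - (c 0 * 1\<^sub>m n $$ (x, y))"
      by (simp add: eq_neg_iff_add_eq_0 add.commute)
    then have "u * ?S = - (u * c 0) * 1\<^sub>m n $$ (x, y)"
      by (simp add: mult.assoc)
    then show ?thesis
      using u by (simp add: sum_distrib_left mult.assoc del: pow_mat.simps(2))
  qed
  show "A * ?B = 1\<^sub>m n"
  proof (rule eq_matI)
    fix x y assume "x < dim_row (1\<^sub>m n :: 'a mat)" "y < dim_col (1\<^sub>m n :: 'a mat)"
    then have xy: "x < n" "y < n" by auto
    have "(A * ?B) $$ (x, y) = (\<Sum>i\<le>d. u * c (Suc i) * (A * A ^\<^sub>m i) $$ (x, y))"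
      by (rule mult_mat_poly_index[OF A A xy])
    then show "(A * ?B) $$ (x, y) = 1\<^sub>m n $$ (x, y)"
      using key[OF xy] by (simp add: pow_mat_Suc_left[OF A] del: pow_mat.simps)
  qed (use A in auto)
  show "?B * A = 1\<^sub>m n"
  proof (rule eq_matI)
    fix x y assume "x < dim_row (1\<^sub>m n :: 'a mat)" "y < dim_col (1\<^sub>m n :: 'a mat)"
    then have xy: "x < n" "y < n" by auto
    have "(?B * A) $$ (x, y) = (\<Sum>i\<le>d. u * c (Suc i) * (A ^\<^sub>m i * A) $$ (x, y))"
      by (rule mat_poly_mult_index[OF A A xy])
    then show "(?B * A) $$ (x, y) = 1\<^sub>m n $$ (x, y)"
      using key[OF xy] by (simp del: index_mult_mat)
  qed (use A in auto)
qed

text \<open>\<open>A\<^sup>N\<close> for \<open>N \<in> \<int>\<close>, where \<open>B\<close> plays the role of \<open>A\<^sup>-\<^sup>1\<close>.\<close>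
definition zpow_mat :: "'a :: semiring_1 mat \<Rightarrow> 'a mat \<Rightarrow> int \<Rightarrow> 'a mat" where
  "zpow_mat A B N = (if 0 \<le> N then A ^\<^sub>m nat N else B ^\<^sub>m nat (- N))"

lemma zpow_mat_add_nat:
  assumes "A \<in> carrier_mat n n" "B \<in> carrier_mat n n" "B * A = 1\<^sub>m n"
  shows "zpow_mat A B (N + int i) = zpow_mat A B N * A ^\<^sub>m i"
proof (cases "0 \<le> N")
  case True
  then have "nat (N + int i) = nat N + i" by simp
  then show ?thesis using True by (simp add: zpow_mat_def pow_mat_add[OF assms(1)])
next
  case False
  then have "nat (N + int i) = i - nat (- N)" by (auto simp: nat_eq_iff)
  then show ?thesis
    using False pow_mat_cancel[OF assms, of "nat (- N)" i] assms(1,2)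
    by (auto simp: zpow_mat_def nat_diff_distrib')
qed

section \<open>Two-sided sequences satisfying a linear recurrence\<close>

definition lin_rec_op :: "(nat \<Rightarrow> int) \<Rightarrow> nat \<Rightarrow> (int \<Rightarrow> int) \<Rightarrow> int \<Rightarrow> int" where
  "lin_rec_op a d g N = (\<Sum>i\<le>d. a i * g (N + int i))"

lemma satisfies_lin_rec_iff:
  "satisfies_lin_rec g \<longleftrightarrow> (\<exists>d a. a 0 \<noteq> 0 \<and> a d \<noteq> 0 \<and> (\<forall>N. lin_rec_op a d g N = 0))"
  by (simp add: satisfies_lin_rec_def lin_rec_op_def)

lemma lin_rec_op_commute: "lin_rec_op a d (lin_rec_op b e g) = lin_rec_op b e (lin_rec_op a d g)"
proof (intro ext)
  fix N
  have "lin_rec_op a d (lin_rec_op b e g) N = (\<Sum>i\<le>d. \<Sum>j\<le>e. a i * b j * g (N + int i + int j))"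
    unfolding lin_rec_op_def by (simp add: sum_distrib_left mult.assoc add.assoc)
  also have "\<dots> = (\<Sum>j\<le>e. \<Sum>i\<le>d. a i * b j * g (N + int i + int j))"
    by (rule sum.swap)
  also have "\<dots> = lin_rec_op b e (lin_rec_op a d g) N"
    unfolding lin_rec_op_def by (simp add: sum_distrib_left mult_ac add_ac)
  finally show "lin_rec_op a d (lin_rec_op b e g) N = lin_rec_op b e (lin_rec_op a d g) N" .
qed

lemma lin_rec_op_diff: "lin_rec_op a d (\<lambda>N. f N - g N) N = lin_rec_op a d f N - lin_rec_op a d g N"
  by (simp add: lin_rec_op_def algebra_simps sum_subtractf)

lemma lin_rec_op_vanishing:
  assumes a0: "a 0 \<noteq> 0" and rec: "\<And>N. lin_rec_op a d g N = 0" and nonneg: "\<And>M. 0 \<le> M \<Longrightarrow> g M = 0"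
  shows "g N = 0"
proof -
  have "\<forall>N \<ge> - int j. g N = 0" for j
  proof (induction j)
    case (Suc j)
    show ?case
    proof (intro allI impI)
      fix N assume N: "- int (Suc j) \<le> N"
      show "g N = 0"
      proof (cases "- int j \<le> N")
        case False
        then have "g (N + int (Suc i)) = 0" for i using Suc N by auto
        then have "lin_rec_op a d g N = a 0 * g N"
          unfolding lin_rec_op_def by (simp add: sum.atMost_shift del: of_nat_Suc)
        then show ?thesis using rec[of N] a0 by simp
      qed (use Suc in blast)
    qed
  qed (use nonneg in simp)
  then show ?thesis by (metis add.inverse_inverse neg_le_iff_le nat_0_le nat_int nat_le_0 nle_le)
qed

text \<open>The difference of two extensions is annihilated by the product of their recurrence
  operators and vanishes on \<open>N \<ge> 0\<close>; running each recurrence backwards kills it.\<close>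
lemma lin_rec_extension_unique:
  assumes "satisfies_lin_rec g1" "satisfies_lin_rec g2" "\<And>M. 0 \<le> M \<Longrightarrow> g1 M = g2 M"
  shows "g1 = g2"
proof -
  obtain d a where a0: "a 0 \<noteq> 0" and rec1: "\<And>N. lin_rec_op a d g1 N = 0"
    using assms(1) by (auto simp: satisfies_lin_rec_iff)
  obtain e b where b0: "b 0 \<noteq> 0" and rec2: "\<And>N. lin_rec_op b e g2 N = 0"
    using assms(2) by (auto simp: satisfies_lin_rec_iff)
  define h where "h = (\<lambda>N. g1 N - g2 N)"
  have rec_ab: "lin_rec_op a d (lin_rec_op b e h) N = 0" for N
  proof -
    have "lin_rec_op b e h = (\<lambda>N. lin_rec_op b e g1 N)"
      using rec2 by (intro ext) (simp add: h_def lin_rec_op_diff)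
    then have "lin_rec_op a d (lin_rec_op b e h) = lin_rec_op b e (lin_rec_op a d g1)"
      by (simp add: lin_rec_op_commute)
    then show ?thesis using rec1 by (simp add: lin_rec_op_def)
  qed
  have h_nonneg: "h M = 0" if "0 \<le> M" for M
    using assms(3) that by (simp add: h_def)
  have "lin_rec_op b e h N = 0" for N
    by (rule lin_rec_op_vanishing[of a d]) (use a0 rec_ab h_nonneg in \<open>auto simp: lin_rec_op_def\<close>)
  then have "h N = 0" for N
    by (rule lin_rec_op_vanishing[of b e, OF b0]) (use h_nonneg in auto)
  then show ?thesis by (auto simp: h_def)
qed

lemma satisfies_lin_rec_zpow_mat:
  assumes A: "A \<in> carrier_mat n n" and B: "B \<in> carrier_mat n n" and BA: "B * A = 1\<^sub>m n"
    and annihilates: "mat_poly c d A = 0\<^sub>m n n" and "c 0 \<noteq> 0" "c d \<noteq> 0"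
    and rs: "r < n" "s < n"
  shows "satisfies_lin_rec (\<lambda>N. zpow_mat A B N $$ (r, s))"
  unfolding satisfies_lin_rec_def
proof (intro exI conjI allI)
  fix N
  have Z: "zpow_mat A B N \<in> carrier_mat n n"
    using A B by (simp add: zpow_mat_def)
  have "(\<Sum>i\<le>d. c i * zpow_mat A B (N + int i) $$ (r, s))
      = (\<Sum>i\<le>d. c i * (zpow_mat A B N * A ^\<^sub>m i) $$ (r, s))"
    by (simp only: zpow_mat_add_nat[OF A B BA])
  also have "\<dots> = (zpow_mat A B N * mat_poly c d A) $$ (r, s)"
    by (rule mult_mat_poly_index[OF A Z rs, symmetric])
  also have "\<dots> = 0"
    using Z rs by (simp add: annihilates)
  finally show "(\<Sum>i\<le>d. c i * zpow_mat A B (N + int i) $$ (r, s)) = 0" .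
qed fact+

section \<open>The adjacency matrix of a path and its inverse\<close>

definition path_adj :: "nat \<Rightarrow> int mat" where
  "path_adj D = mat D D (\<lambda>(i, j). if i = Suc j \<or> j = Suc i then 1 else 0)"

lemma dim_path_adj [simp]: "dim_row (path_adj D) = D" "dim_col (path_adj D) = D"
  by (simp_all add: path_adj_def)

lemma path_adj_carrier [simp]: "path_adj D \<in> carrier_mat D D"
  by (simp add: path_adj_def)

lemma transpose_path_adj: "transpose_mat (path_adj D) = path_adj D"
  unfolding path_adj_def by (intro eq_matI) auto

lemma path_adj_mult_index:
  assumes "X \<in> carrier_mat D m" "x < D" "y < m"
  shows "(path_adj D * X) $$ (x, y)
    = (if 0 < x then X $$ (x - 1, y) else 0) + (if Suc x < D then X $$ (Suc x, y) else 0)"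
proof -
  have "(path_adj D * X) $$ (x, y)
      = (\<Sum>t<D. (if 0 < x \<and> t = x - 1 then X $$ (t, y) else 0)
          + (if t = Suc x then X $$ (t, y) else 0))"
    using assms unfolding path_adj_def
    by (simp add: scalar_prod_def lessThan_atLeast0) (intro sum.cong; force)
  also have "\<dots> = (if 0 < x then X $$ (x - 1, y) else 0)
      + (if Suc x < D then X $$ (Suc x, y) else 0)"
    using assms by (simp add: sum.distrib)
  finally show ?thesis .
qed

text \<open>Coefficients of the Chebyshev polynomials \<open>U\<^sub>0 = 1\<close>, \<open>U\<^sub>1 = x\<close>,
  \<open>U\<^sub>j\<^sub>+\<^sub>2 = x U\<^sub>j\<^sub>+\<^sub>1 - U\<^sub>j\<close>; \<open>U\<^sub>j\<close> is the characteristic polynomial of the path on \<open>j\<close> vertices.\<close>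
fun cheb_coeff :: "nat \<Rightarrow> nat \<Rightarrow> int" where
  "cheb_coeff 0 i = of_bool (i = 0)"
| "cheb_coeff (Suc 0) i = of_bool (i = 1)"
| "cheb_coeff (Suc (Suc j)) i = (if i = 0 then 0 else cheb_coeff (Suc j) (i - 1)) - cheb_coeff j i"

lemma cheb_coeff_above_degree: "j < i \<Longrightarrow> cheb_coeff j i = 0"
  by (induction j i rule: cheb_coeff.induct) auto

lemma cheb_coeff_degree [simp]: "cheb_coeff j j = 1"
  by (induction j rule: induct_nat_012) (auto simp: cheb_coeff_above_degree)

lemma cheb_coeff_0: "cheb_coeff j 0 = (if even j then (-1) ^ (j div 2) else 0)"
  by (induction j rule: induct_nat_012) auto

definition cheb_mat :: "int mat \<Rightarrow> nat \<Rightarrow> int mat" where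
  "cheb_mat A j = mat_poly (cheb_coeff j) j A"

lemma dim_cheb_mat [simp]:
  "dim_row (cheb_mat A j) = dim_row A" "dim_col (cheb_mat A j) = dim_row A"
  by (simp_all add: cheb_mat_def)

lemma cheb_mat_carrier [simp]: "A \<in> carrier_mat n n \<Longrightarrow> cheb_mat A j \<in> carrier_mat n n"
  by (simp add: cheb_mat_def)

lemma cheb_mat_0: "A \<in> carrier_mat n n \<Longrightarrow> cheb_mat A 0 = 1\<^sub>m n"
  by (intro eq_matI) (auto simp: cheb_mat_def mat_poly_def)

lemma cheb_mat_1: "A \<in> carrier_mat n n \<Longrightarrow> cheb_mat A (Suc 0) = A"
  by (intro eq_matI) (auto simp: cheb_mat_def mat_poly_def)

lemma cheb_mat_Suc_Suc:
  assumes A: "A \<in> carrier_mat n n"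
  shows "cheb_mat A (Suc (Suc j)) = A * cheb_mat A (Suc j) - cheb_mat A j"
proof (rule eq_matI)
  fix x y assume "x < dim_row (A * cheb_mat A (Suc j) - cheb_mat A j)"
    "y < dim_col (A * cheb_mat A (Suc j) - cheb_mat A j)"
  then have xy: "x < n" "y < n" using A by (auto simp: cheb_mat_def)
  let ?P = "\<lambda>i. (A ^\<^sub>m i) $$ (x, y)"
  have "(A * cheb_mat A (Suc j)) $$ (x, y)
      = (\<Sum>i\<le>Suc j. cheb_coeff (Suc j) i * (A * A ^\<^sub>m i) $$ (x, y))"
    unfolding cheb_mat_def by (rule mult_mat_poly_index[OF A A xy])
  also have "\<dots> = (\<Sum>i\<le>Suc (Suc j). (if i = 0 then 0 else cheb_coeff (Suc j) (i - 1)) * ?P i)"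
    by (simp add: sum.atMost_Suc_shift pow_mat_Suc_left[OF A] del: pow_mat.simps sum.atMost_Suc)
  finally have shifted: "(A * cheb_mat A (Suc j)) $$ (x, y) = \<dots>" .
  have low: "cheb_mat A j $$ (x, y) = (\<Sum>i\<le>Suc (Suc j). cheb_coeff j i * ?P i)"
    using A xy by (simp add: cheb_mat_def mat_poly_def cheb_coeff_above_degree)
  have "(A * cheb_mat A (Suc j) - cheb_mat A j) $$ (x, y)
      = (A * cheb_mat A (Suc j)) $$ (x, y) - cheb_mat A j $$ (x, y)"
    using A xy by (simp add: cheb_mat_def del: index_mult_mat)
  also have "\<dots> = (\<Sum>i\<le>Suc (Suc j). cheb_coeff (Suc (Suc j)) i * ?P i)"
    unfolding shifted low by (simp add: sum_subtractf left_diff_distrib del: sum.atMost_Suc)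
  also have "\<dots> = cheb_mat A (Suc (Suc j)) $$ (x, y)"
    using A xy by (simp add: cheb_mat_def mat_poly_def del: sum.atMost_Suc cheb_coeff.simps)
  finally show "cheb_mat A (Suc (Suc j)) $$ (x, y)
      = (A * cheb_mat A (Suc j) - cheb_mat A j) $$ (x, y)"
    by simp
qed (use A in \<open>auto simp: cheb_mat_def\<close>)

lemma cheb_mat_commute:
  assumes "A \<in> carrier_mat n n"
  shows "cheb_mat A i * cheb_mat A j = cheb_mat A j * cheb_mat A i"
proof -
  have "A * cheb_mat A i = cheb_mat A i * A"
    unfolding cheb_mat_def by (rule mat_poly_commute) (use assms in auto)
  then show ?thesis
    unfolding cheb_mat_def by (intro mat_poly_commute) (use assms in \<open>auto simp: cheb_mat_def\<close>)
qed

lemma cheb_mat_path_adj_col0: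
  assumes "j \<le> D" "x < D"
  shows "cheb_mat (path_adj D) j $$ (x, 0) = of_bool (x = j)"
  using assms
proof (induction j arbitrary: x rule: induct_nat_012)
  case 0
  then show ?case by (simp add: cheb_mat_0[of _ D])
next
  case 1
  then show ?case by (auto simp: cheb_mat_1[of _ D] path_adj_def)
next
  case (ge2 j)
  let ?Q = "cheb_mat (path_adj D)"
  have "(path_adj D * ?Q (Suc j)) $$ (x, 0)
      = (if 0 < x then ?Q (Suc j) $$ (x - 1, 0) else 0)
        + (if Suc x < D then ?Q (Suc j) $$ (Suc x, 0) else 0)"
    using ge2.prems by (intro path_adj_mult_index) auto
  also have "\<dots> = of_bool (x = Suc (Suc j)) + of_bool (x = j)"
    using ge2 by auto
  finally have "(path_adj D * ?Q (Suc j)) $$ (x, 0) = of_bool (x = Suc (Suc j)) + of_bool (x = j)" .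
  moreover have "?Q (Suc (Suc j)) $$ (x, 0) = (path_adj D * ?Q (Suc j)) $$ (x, 0) - ?Q j $$ (x, 0)"
    unfolding cheb_mat_Suc_Suc[OF path_adj_carrier] using ge2.prems by (intro index_minus_mat) auto
  ultimately show ?case using ge2 by simp
qed

text \<open>Cayley--Hamilton for the path: \<open>U\<^sub>j(A) e\<^sub>0 = e\<^sub>j\<close> for \<open>j < D\<close> and \<open>U\<^sub>D(A) e\<^sub>0 = 0\<close>,
  so \<open>U\<^sub>D(A) e\<^sub>j = U\<^sub>j(A) U\<^sub>D(A) e\<^sub>0 = 0\<close> for every \<open>j\<close>.\<close>
lemma cheb_mat_path_adj_vanishes: "cheb_mat (path_adj D) D = 0\<^sub>m D D"
proof (rule eq_matI)
  fix x y assume "x < dim_row (0\<^sub>m D D :: int mat)" "y < dim_col (0\<^sub>m D D :: int mat)"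
  then have xy: "x < D" "y < D" by auto
  let ?Q = "cheb_mat (path_adj D)"
  have "?Q D $$ (x, y) = (\<Sum>t<D. ?Q D $$ (x, t) * of_bool (t = y))"
    using xy by simp
  also have "\<dots> = (?Q D * ?Q y) $$ (x, 0)"
    using xy by (simp add: scalar_prod_def lessThan_atLeast0 cheb_mat_path_adj_col0)
  also have "\<dots> = (?Q y * ?Q D) $$ (x, 0)"
    by (simp only: cheb_mat_commute[OF path_adj_carrier])
  also have "\<dots> = 0"
    using xy by (simp add: scalar_prod_def cheb_mat_path_adj_col0)
  finally show "?Q D $$ (x, y) = 0\<^sub>m D D $$ (x, y)" using xy by simp
qed auto

text \<open>From \<open>U\<^sub>D(A) = 0\<close> with constant coefficient \<open>c\<^sub>0 = \<plusminus>1\<close> (for even \<open>D\<close>):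
  \<open>A\<^sup>-\<^sup>1 = - c\<^sub>0 \<Sum> c\<^sub>i\<^sub>+\<^sub>1 A\<^sup>i\<close>.\<close>
definition path_adj_inv :: "nat \<Rightarrow> int mat" where
  "path_adj_inv D = mat_poly (\<lambda>i. - cheb_coeff D 0 * cheb_coeff D (Suc i)) (D - 1) (path_adj D)"

lemma dim_path_adj_inv [simp]: "dim_row (path_adj_inv D) = D" "dim_col (path_adj_inv D) = D"
  by (simp_all add: path_adj_inv_def)

lemma path_adj_inv_carrier [simp]: "path_adj_inv D \<in> carrier_mat D D"
  by (simp add: path_adj_inv_def)

lemma path_adj_inverse:
  assumes "even D" "0 < D"
  shows "path_adj D * path_adj_inv D = 1\<^sub>m D" "path_adj_inv D * path_adj D = 1\<^sub>m D"
proof -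
  have u: "- cheb_coeff D 0 * cheb_coeff D 0 = -1"
    using assms(1) by (simp add: cheb_coeff_0 flip: power_add)
  have annihilates: "mat_poly (cheb_coeff D) (Suc (D - 1)) (path_adj D) = 0\<^sub>m D D"
    using cheb_mat_path_adj_vanishes[of D] assms(2) by (simp add: cheb_mat_def)
  show "path_adj D * path_adj_inv D = 1\<^sub>m D" "path_adj_inv D * path_adj D = 1\<^sub>m D"
    unfolding path_adj_inv_def by (fact mat_poly_inverse[OF path_adj_carrier annihilates u])+
qed

section \<open>Lattice paths in a strip\<close>

lemma strip_paths_0: "strip_paths K 0 r s = (if r = s \<and> 0 \<le> r \<and> r \<le> K then {[r]} else {})"
  by (auto simp: strip_paths_def length_Suc_conv)

lemma finite_strip_paths: "finite (strip_paths K N r s)"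
proof (rule finite_subset)
  show "strip_paths K N r s \<subseteq> {xs. set xs \<subseteq> {0..K} \<and> length xs = Suc N}"
    by (auto simp: strip_paths_def in_set_conv_nth less_Suc_eq_le)
  show "finite {xs. set xs \<subseteq> {0..K} \<and> length xs = Suc N}"
    by (rule finite_lists_length_eq) simp
qed

lemma strip_paths_Suc:
  assumes "0 \<le> r" "r \<le> K"
  shows "strip_paths K (Suc N) r s
    = (\<lambda>ys. r # ys) ` (strip_paths K N (r - 1) s \<union> strip_paths K N (r + 1) s)"
proof (intro equalityI subsetI)
  fix xs assume xs: "xs \<in> strip_paths K (Suc N) r s"
  then obtain ys where xs_ys: "xs = r # ys" and len: "length ys = Suc N"
    by (cases xs) (auto simp: strip_paths_def)
  have "ys \<in> strip_paths K N (ys ! 0) s" and "\<bar>ys ! 0 - r\<bar> = 1"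
    using xs len unfolding xs_ys strip_paths_def by (auto simp flip: Suc_le_eq)
  moreover have "ys ! 0 = r - 1 \<or> ys ! 0 = r + 1"
    using \<open>\<bar>ys ! 0 - r\<bar> = 1\<close> by arith
  ultimately have "ys \<in> strip_paths K N (r - 1) s \<union> strip_paths K N (r + 1) s"
    by auto
  then show "xs \<in> (\<lambda>ys. r # ys) ` (strip_paths K N (r - 1) s \<union> strip_paths K N (r + 1) s)"
    using xs_ys by blast
next
  fix xs assume "xs \<in> (\<lambda>ys. r # ys) ` (strip_paths K N (r - 1) s \<union> strip_paths K N (r + 1) s)"
  then obtain ys t where xs: "xs = r # ys" and ys: "ys \<in> strip_paths K N t s" and t: "\<bar>t - r\<bar> = 1"
    by auto
  show "xs \<in> strip_paths K (Suc N) r s"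
    unfolding strip_paths_def
  proof (intro CollectI conjI allI impI)
    fix i
    show "i < Suc N \<Longrightarrow> \<bar>xs ! Suc i - xs ! i\<bar> = 1"
      using ys t by (cases i) (auto simp: xs strip_paths_def)
    show "i \<le> Suc N \<Longrightarrow> 0 \<le> xs ! i" "i \<le> Suc N \<Longrightarrow> xs ! i \<le> K"
      using ys assms by (cases i; auto simp: xs strip_paths_def)+
  qed (use ys in \<open>auto simp: xs strip_paths_def\<close>)
qed

lemma C_nonneg_Suc:
  assumes "0 \<le> r" "r \<le> K"
  shows "C_nonneg K (Suc N) r s = C_nonneg K N (r - 1) s + C_nonneg K N (r + 1) s"
proof -
  have "strip_paths K N (r - 1) s \<inter> strip_paths K N (r + 1) s = {}"
    by (auto simp: strip_paths_def)
  then show ?thesis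
    unfolding C_nonneg_def strip_paths_Suc[OF assms]
    by (simp add: card_image card_Un_disjoint finite_strip_paths)
qed

lemma C_nonneg_outside_strip:
  assumes "\<not> (0 \<le> r \<and> r \<le> K)"
  shows "C_nonneg K N r s = 0"
proof -
  have "strip_paths K N r s = {}"
    using assms by (force simp: strip_paths_def)
  then show ?thesis by (simp add: C_nonneg_def)
qed

lemma C_nonneg_path_adj_pow:
  assumes "r < D" "s < D"
  shows "C_nonneg (int D - 1) N (int r) (int s) = (path_adj D ^\<^sub>m N) $$ (r, s)"
  using assms(1)
proof (induction N arbitrary: r)
  case 0
  then show ?case using assms(2) by (simp add: C_nonneg_def strip_paths_0)
next
  case (Suc N)
  have "C_nonneg (int D - 1) (Suc N) (int r) (int s)
      = (if 0 < r then C_nonneg (int D - 1) N (int (r - 1)) (int s) else 0)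
        + (if Suc r < D then C_nonneg (int D - 1) N (int (Suc r)) (int s) else 0)"
    using Suc.prems by (simp add: C_nonneg_Suc C_nonneg_outside_strip of_nat_diff add.commute)
  also have "\<dots> = (if 0 < r then (path_adj D ^\<^sub>m N) $$ (r - 1, s) else 0)
        + (if Suc r < D then (path_adj D ^\<^sub>m N) $$ (Suc r, s) else 0)"
    using Suc.IH[of "r - 1"] Suc.IH[of "Suc r"] Suc.prems by auto
  also have "\<dots> = (path_adj D * path_adj D ^\<^sub>m N) $$ (r, s)"
    using Suc.prems assms(2) by (intro path_adj_mult_index[symmetric]) auto
  also have "\<dots> = (path_adj D ^\<^sub>m Suc N) $$ (r, s)"
    by (simp only: pow_mat_Suc_left[OF path_adj_carrier])
  finally show ?case .
qed

lemma C_path_adj: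
  assumes "even D" "0 < D" "r < D" "s < D"
  shows "C (int D - 1) N (int r) (int s) = zpow_mat (path_adj D) (path_adj_inv D) N $$ (r, s)"
proof -
  let ?g = "\<lambda>N. zpow_mat (path_adj D) (path_adj_inv D) N $$ (r, s)"
  let ?P = "\<lambda>g. (\<forall>M\<ge>0. g M = C_nonneg (int D - 1) (nat M) (int r) (int s)) \<and> satisfies_lin_rec g"
  have "cheb_mat (path_adj D) D = 0\<^sub>m D D" by (rule cheb_mat_path_adj_vanishes)
  then have "satisfies_lin_rec ?g"
    using assms path_adj_inverse[OF assms(1,2)]
    by (intro satisfies_lin_rec_zpow_mat[where c = "cheb_coeff D" and d = D])
      (auto simp: cheb_mat_def cheb_coeff_0)
  moreover have nonneg: "?g M = C_nonneg (int D - 1) (nat M) (int r) (int s)" if "0 \<le> M" for M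
    using that assms by (simp add: zpow_mat_def C_nonneg_path_adj_pow)
  ultimately have "(THE g. ?P g) = ?g"
    by (intro the_equality[where P = ?P]) (auto intro: lin_rec_extension_unique)
  then show ?thesis
    using nonneg by (simp add: C_def)
qed

section \<open>Blocks of even indices\<close>

definition parity_supported :: "nat \<Rightarrow> 'a :: zero mat \<Rightarrow> bool" where
  "parity_supported p X \<longleftrightarrow> (\<forall>i<dim_row X. \<forall>j<dim_col X. X $$ (i, j) \<noteq> 0 \<longrightarrow> even (i + j + p))"

lemma parity_supportedD:
  "parity_supported p X \<Longrightarrow> i < dim_row X \<Longrightarrow> j < dim_col X \<Longrightarrow> odd (i + j + p) \<Longrightarrow> X $$ (i, j) = 0"
  unfolding parity_supported_def by blast

lemma parity_supported_mult:
  fixes X Y :: "'a :: semiring_0 mat"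
  assumes "X \<in> carrier_mat nr n" "Y \<in> carrier_mat n nc"
    and "parity_supported p X" "parity_supported q Y"
  shows "parity_supported (p + q) (X * Y)"
  unfolding parity_supported_def
proof (intro allI impI)
  fix i j assume ij: "i < dim_row (X * Y)" "j < dim_col (X * Y)" and "(X * Y) $$ (i, j) \<noteq> 0"
  then have "(\<Sum>t\<in>{0..<n}. X $$ (i, t) * Y $$ (t, j)) \<noteq> 0"
    using assms(1,2) by (simp add: scalar_prod_def)
  then obtain t where t: "t < n" "X $$ (i, t) \<noteq> 0" "Y $$ (t, j) \<noteq> 0"
    by (metis (no_types, lifting) atLeastLessThan_iff mult_not_zero sum.neutral)
  then have "even (i + t + p)" "even (t + j + q)"
    using assms ij unfolding parity_supported_def by auto
  then show "even (i + j + (p + q))" by presburger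
qed

lemma parity_supported_one: "parity_supported 0 (1\<^sub>m n)"
  by (simp add: parity_supported_def)

lemma parity_supported_pow:
  assumes "X \<in> carrier_mat n n" "parity_supported p X"
  shows "parity_supported (p * k) (X ^\<^sub>m k)"
proof (induction k)
  case 0
  then show ?case using assms(1) by (simp add: parity_supported_one)
next
  case (Suc k)
  then show ?case
    using parity_supported_mult[OF pow_carrier_mat[OF assms(1)] assms(1) Suc assms(2)]
    by (simp add: add.commute)
qed

lemma parity_supported_path_adj: "parity_supported 1 (path_adj D)"
  by (auto simp: parity_supported_def path_adj_def)

lemma sum_lessThan_double: "(\<Sum>t<2 * (p :: nat). f t) = (\<Sum>c<p. f (2 * c) + f (2 * c + 1))"
  by (induction p) (auto simp: add_ac)

definition even_block :: "nat \<Rightarrow> 'a mat \<Rightarrow> 'a mat" where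
  "even_block L X = mat L L (\<lambda>(a, b). X $$ (2 * a, 2 * b))"

lemma dim_even_block [simp]: "dim_row (even_block L X) = L" "dim_col (even_block L X) = L"
  by (simp_all add: even_block_def)

lemma even_block_carrier [simp]: "even_block L X \<in> carrier_mat L L"
  by (simp add: even_block_def)

lemma even_block_one: "even_block L (1\<^sub>m (2 * L)) = (1\<^sub>m L :: 'a :: semiring_1 mat)"
  by (intro eq_matI) (auto simp: even_block_def)

lemma even_block_mult:
  fixes X Y :: "'a :: comm_semiring_1 mat"
  assumes "X \<in> carrier_mat (2 * L) (2 * L)" "Y \<in> carrier_mat (2 * L) (2 * L)"
    and "parity_supported 0 X"
  shows "even_block L (X * Y) = even_block L X * even_block L Y"
proof (rule eq_matI)
  fix a b assume "a < dim_row (even_block L X * even_block L Y)"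
    "b < dim_col (even_block L X * even_block L Y)"
  then have ab: "a < L" "b < L" by auto
  have odd_zero: "X $$ (2 * a, 2 * c + 1) = 0" if "c < L" for c
    using assms(1,3) ab that by (intro parity_supportedD) auto
  have "(X * Y) $$ (2 * a, 2 * b) = (\<Sum>t<2 * L. X $$ (2 * a, t) * Y $$ (t, 2 * b))"
    using assms ab by (simp add: scalar_prod_def lessThan_atLeast0)
  also have "\<dots> = (\<Sum>c<L. X $$ (2 * a, 2 * c) * Y $$ (2 * c, 2 * b))"
    unfolding sum_lessThan_double using odd_zero by simp
  finally show "even_block L (X * Y) $$ (a, b) = (even_block L X * even_block L Y) $$ (a, b)"
    using ab by (simp add: even_block_def scalar_prod_def lessThan_atLeast0)
qed auto

lemma even_block_pow:
  fixes X :: "'a :: comm_semiring_1 mat"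
  assumes "X \<in> carrier_mat (2 * L) (2 * L)" "parity_supported 0 X"
  shows "even_block L (X ^\<^sub>m k) = even_block L X ^\<^sub>m k"
proof (induction k)
  case 0
  then show ?case using assms(1) by (simp add: even_block_one)
next
  case (Suc k)
  have "parity_supported 0 (X ^\<^sub>m k)"
    using parity_supported_pow[OF assms] by simp
  then show ?case
    using Suc assms by (simp add: even_block_mult)
qed

lemma transpose_even_block:
  assumes "X \<in> carrier_mat (2 * L) (2 * L)" "transpose_mat X = X"
  shows "transpose_mat (even_block L X) = even_block L X"
proof (rule eq_matI)
  fix i j assume "i < dim_row (even_block L X)" "j < dim_col (even_block L X)"
  then show "transpose_mat (even_block L X) $$ (i, j) = even_block L X $$ (i, j)"
    using arg_cong[OF assms(2), of "\<lambda>Y. Y $$ (2 * i, 2 * j)"] assms(1)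
    by (simp add: even_block_def)
qed auto

lemma even_block_path_adj_pow_inverse:
  assumes "0 < L"
  shows "even_block L (path_adj (2 * L) ^\<^sub>m (2 * n))
    * even_block L (path_adj_inv (2 * L) ^\<^sub>m (2 * n)) = 1\<^sub>m L"
proof -
  let ?A = "path_adj (2 * L)" and ?W = "path_adj_inv (2 * L)"
  have "parity_supported 0 (?A ^\<^sub>m (2 * n))"
    using parity_supported_pow[OF path_adj_carrier parity_supported_path_adj, where k = "2 * n"]
    by (simp add: parity_supported_def)
  then have "even_block L (?A ^\<^sub>m (2 * n)) * even_block L (?W ^\<^sub>m (2 * n))
      = even_block L (?A ^\<^sub>m (2 * n) * ?W ^\<^sub>m (2 * n))"
    by (simp add: even_block_mult)
  also have "?A ^\<^sub>m (2 * n) * ?W ^\<^sub>m (2 * n) = 1\<^sub>m (2 * L)"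
    using path_adj_inverse[of "2 * L"] assms by (intro pow_mat_inverse) auto
  finally show ?thesis by (simp add: even_block_one)
qed

text \<open>The even block of \<open>A\<^sup>2\<close> is \<open>B B\<^sup>T\<close> with \<open>B = A[even, odd]\<close> lower unitriangular.\<close>
lemma det_even_block_path_adj_sq: "det (even_block L (path_adj (2 * L) ^\<^sub>m 2)) = 1"
proof -
  define B where "B = mat L L (\<lambda>(a, c). path_adj (2 * L) $$ (2 * a, 2 * c + 1))"
  have B: "B \<in> carrier_mat L L" by (simp add: B_def)
  have "even_block L (path_adj (2 * L) ^\<^sub>m 2) = B * transpose_mat B"
  proof (rule eq_matI)
    fix a b assume "a < dim_row (B * transpose_mat B)" "b < dim_col (B * transpose_mat B)"
    then have ab: "a < L" "b < L" by (auto simp: B_def)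
    have "(path_adj (2 * L) ^\<^sub>m 2) $$ (2 * a, 2 * b)
        = (\<Sum>t<2 * L. path_adj (2 * L) $$ (2 * a, t) * path_adj (2 * L) $$ (t, 2 * b))"
      using ab by (simp add: numeral_2_eq_2 scalar_prod_def lessThan_atLeast0)
    also have "\<dots> = (\<Sum>c<L. path_adj (2 * L) $$ (2 * a, 2 * c + 1)
        * path_adj (2 * L) $$ (2 * b, 2 * c + 1))"
      unfolding sum_lessThan_double using ab by (intro sum.cong) (auto simp: path_adj_def)
    finally show "even_block L (path_adj (2 * L) ^\<^sub>m 2) $$ (a, b) = (B * transpose_mat B) $$ (a, b)"
      using ab by (simp add: even_block_def B_def scalar_prod_def lessThan_atLeast0)
  qed (auto simp: B_def)
  moreover have "det B = 1"
  proof -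
    have "det B = prod_list (diag_mat B)"
      by (rule det_lower_triangular[OF _ B]) (auto simp: B_def path_adj_def)
    also have "\<dots> = 1"
      unfolding prod_list_diag_prod by (simp add: B_def path_adj_def)
    finally show ?thesis .
  qed
  ultimately show ?thesis
    using B by (simp add: det_mult[of _ L] det_transpose)
qed

lemma det_even_block_path_adj_pow: "det (even_block L (path_adj (2 * L) ^\<^sub>m (2 * n))) = 1"
proof -
  have "parity_supported 0 (path_adj (2 * L) ^\<^sub>m 2)"
    using parity_supported_pow[OF path_adj_carrier parity_supported_path_adj, where k = 2]
    by (simp add: parity_supported_def)
  then have "even_block L (path_adj (2 * L) ^\<^sub>m (2 * n))
      = even_block L (path_adj (2 * L) ^\<^sub>m 2) ^\<^sub>m n"
    by (simp add: pow_mat_mult[OF path_adj_carrier] even_block_pow)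
  then show ?thesis
    by (simp add: det_pow_mat[of _ L] det_even_block_path_adj_sq)
qed

lemma C_even_block:
  assumes "0 < L" "a < L" "b < L"
  shows "C (2 * int L - 1) (2 * int n) (2 * int a) (2 * int b)
      = even_block L (path_adj (2 * L) ^\<^sub>m (2 * n)) $$ (a, b)"
    and "C (2 * int L - 1) (- 2 * int n) (2 * int a) (2 * int b)
      = even_block L (path_adj_inv (2 * L) ^\<^sub>m (2 * n)) $$ (a, b)"
  using C_path_adj[of "2 * L" "2 * a" "2 * b"] assms
  by (auto simp: zpow_mat_def even_block_def nat_mult_distrib)

section \<open>Complementary minors\<close>

lemma strict_mono_on_enum_unique:
  fixes f g :: "nat \<Rightarrow> 'a :: linorder"
  assumes "strict_mono_on {0..<p} f" "strict_mono_on {0..<p} g" "f ` {0..<p} = g ` {0..<p}" "i < p"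
  shows "f i = g i"
proof -
  have "sorted_wrt (<) (map f [0..<p])" "sorted_wrt (<) (map g [0..<p])"
    using assms(1,2) by (auto simp: sorted_wrt_iff_nth_less strict_mono_on_def)
  then have "map f [0..<p] = map g [0..<p]"
    using assms(3) by (intro sorted_distinct_set_unique) (auto simp: strict_sorted_iff)
  then show ?thesis
    using assms(4) by (metis diff_zero length_upt nth_map nth_upt plus_nat.add_0)
qed

lemma index_mat_delete:
  assumes "Z \<in> carrier_mat (Suc n) (Suc n)" "\<rho> < Suc n" "c < Suc n"
    and "i < Suc n" "j < Suc n" "i \<noteq> \<rho>" "j \<noteq> c"
  shows "mat_delete Z \<rho> c $$ (delete_index \<rho> i, delete_index c j) = Z $$ (i, j)"
proof -
  have "delete_index \<rho> i < n" "delete_index c j < n"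
    using assms by (auto simp: delete_index_def)
  then have "mat_delete Z \<rho> c $$ (delete_index \<rho> i, delete_index c j)
      = Z $$ (insert_index \<rho> (delete_index \<rho> i), insert_index c (delete_index c j))"
    by (rule mat_delete_index[OF assms(1-3), symmetric])
  then show ?thesis
    using assms(6,7) by (simp add: insert_delete_index)
qed

lemma strict_mono_on_delete_index:
  assumes "strict_mono_on A f" "c \<notin> f ` A"
  shows "strict_mono_on A (\<lambda>j. delete_index c (f j))"
proof (rule strict_mono_onI)
  fix i j assume "i \<in> A" "j \<in> A" "i < j"
  then have "f i < f j" "f i \<noteq> c" "f j \<noteq> c"
    using assms by (auto simp: strict_mono_on_def)
  then show "delete_index c (f i) < delete_index c (f j)"
    by (auto simp: delete_index_def)
qed

lemma enum_complement_delete_last: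
  fixes c cb :: "nat \<Rightarrow> nat"
  assumes c: "strict_mono_on {0..<Suc q} c" "c q < Suc n"
    and cb: "strict_mono_on {0..<p} cb" "cb ` {0..<p} = {0..<Suc n} - c ` {0..<Suc q}"
  shows "strict_mono_on {0..<p} (\<lambda>j. delete_index (c q) (cb j))"
    and "(\<lambda>j. delete_index (c q) (cb j)) ` {0..<p} = {0..<n} - c ` {0..<q}"
proof -
  show "strict_mono_on {0..<p} (\<lambda>j. delete_index (c q) (cb j))"
    using cb by (intro strict_mono_on_delete_index) auto
  have c_below: "c t < c q" if "t < q" for t
    using c(1) that by (auto simp: strict_mono_on_def)
  have "delete_index (c q) ` ({0..<Suc n} - c ` {0..<Suc q}) = {0..<n} - c ` {0..<q}"
  proof (intro equalityI subsetI)
    fix x assume "x \<in> delete_index (c q) ` ({0..<Suc n} - c ` {0..<Suc q})"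
    then obtain y where y: "y < Suc n" "y \<notin> c ` {0..<Suc q}" and x: "x = delete_index (c q) y"
      by auto
    have "y \<noteq> c q" using y(2) by auto
    have "x \<noteq> c t" if "t < q" for t
    proof (cases "y < c q")
      case False
      then have "x = y - 1" "c q < y" using y(2) by (auto simp: x delete_index_def)
      then show ?thesis using c_below[OF that] by simp
    qed (use y(2) that in \<open>auto simp: x delete_index_def\<close>)
    moreover have "x < n"
      using y(1) c(2) \<open>y \<noteq> c q\<close> by (cases "y < c q") (auto simp: x delete_index_def)
    ultimately show "x \<in> {0..<n} - c ` {0..<q}" by (auto simp: image_iff)
  next
    fix x assume x: "x \<in> {0..<n} - c ` {0..<q}"
    define y where "y = insert_index (c q) x"
    have "y \<noteq> c t" if "t < Suc q" for t
      using x c_below[of t] that by (cases "t = q") (auto simp: y_def insert_index_def)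
    then have "y \<notin> c ` {0..<Suc q}" by (metis atLeastLessThan_iff imageE)
    then have "y \<in> {0..<Suc n} - c ` {0..<Suc q}"
      using x by (auto simp: y_def insert_index_def)
    moreover have "x = delete_index (c q) y"
      by (simp add: y_def insert_index_def delete_index_def)
    ultimately show "x \<in> delete_index (c q) ` ({0..<Suc n} - c ` {0..<Suc q})" by blast
  qed
  then show "(\<lambda>j. delete_index (c q) (cb j)) ` {0..<p} = {0..<n} - c ` {0..<q}"
    unfolding cb(2)[symmetric] by (simp add: image_image)
qed

lemma det_unit_column:
  fixes Z :: "'a :: comm_ring_1 mat"
  assumes Z: "Z \<in> carrier_mat n n" and "c < n" "\<rho> < n"
    and col: "\<And>i. i < n \<Longrightarrow> Z $$ (i, c) = (if i = \<rho> then 1 else 0)"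
  shows "det Z = (-1) ^ (\<rho> + c) * det (mat_delete Z \<rho> c)"
proof -
  have "det Z = (\<Sum>i<n. Z $$ (i, c) * cofactor Z i c)"
    by (rule laplace_expansion_column[OF Z \<open>c < n\<close>])
  also have "\<dots> = (\<Sum>i<n. if i = \<rho> then cofactor Z i c else 0)"
    by (rule sum.cong) (simp_all add: col)
  also have "\<dots> = cofactor Z \<rho> c"
    using \<open>\<rho> < n\<close> by simp
  finally show ?thesis by (simp add: cofactor_def)
qed

lemma mat_delete_unit_columns:
  assumes Z: "Z \<in> carrier_mat (Suc n) (Suc n)" and "c q < Suc n" "\<rho> q < Suc n"
    and below: "\<forall>t<q. c t < c q \<and> \<rho> t < \<rho> q"
    and unit: "\<forall>t<q. \<forall>i<Suc n. Z $$ (i, c t) = (if i = \<rho> t then 1 else 0)"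
  shows "\<forall>t<q. \<forall>i<n. mat_delete Z (\<rho> q) (c q) $$ (i, c t) = (if i = \<rho> t then 1 else 0)"
proof (intro allI impI)
  fix t i assume t: "t < q" and i: "i < n"
  have "mat_delete Z (\<rho> q) (c q) $$ (i, c t)
      = Z $$ (insert_index (\<rho> q) i, insert_index (c q) (c t))"
    using mat_delete_index[OF Z, of "\<rho> q" "c q" i "c t"] assms t i by auto
  then show "mat_delete Z (\<rho> q) (c q) $$ (i, c t) = (if i = \<rho> t then 1 else 0)"
    using unit below t i by (auto simp: insert_index_def)
qed

lemma det_unit_columns:
  fixes Z :: "'a :: comm_ring_1 mat"
  assumes "Z \<in> carrier_mat n n" "q \<le> n"
    and "strict_mono_on {0..<q} c" "strict_mono_on {0..<q} \<rho>" "\<forall>t<q. c t < n \<and> \<rho> t < n"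
    and "\<forall>t<q. \<forall>i<n. Z $$ (i, c t) = (if i = \<rho> t then 1 else 0)"
    and "strict_mono_on {0..<n - q} cb" "cb ` {0..<n - q} = {0..<n} - c ` {0..<q}"
    and "strict_mono_on {0..<n - q} \<rho>b" "\<rho>b ` {0..<n - q} = {0..<n} - \<rho> ` {0..<q}"
  shows "det Z = (-1) ^ (\<Sum>t<q. c t + \<rho> t) * det (mat (n - q) (n - q) (\<lambda>(i, j). Z $$ (\<rho>b i, cb j)))"
  using assms
proof (induction q arbitrary: n Z cb \<rho>b)
  case 0
  have "cb i = i" "\<rho>b i = i" if "i < n" for i
    using strict_mono_on_enum_unique[of n _ id i] 0 that by (auto simp: strict_mono_on_def)
  then have "mat n n (\<lambda>(i, j). Z $$ (\<rho>b i, cb j)) = Z"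
    using "0.prems"(1) by (intro eq_matI) auto
  then show ?case by simp
next
  case (Suc q)
  obtain n' where n: "n = Suc n'" using Suc.prems(2) by (cases n) auto
  have c_below: "c t < c q" and \<rho>_below: "\<rho> t < \<rho> q" if "t < q" for t
    using Suc.prems(3,4) that by (auto simp: strict_mono_on_def)
  have cq: "c q < n" and \<rho>q: "\<rho> q < n" using Suc.prems(5) by auto
  have below_n': "c t < n'" "\<rho> t < n'" if "t < q" for t
    using c_below[OF that] \<rho>_below[OF that] cq \<rho>q n by auto
  have cb: "cb j < n" "cb j \<noteq> c q" and \<rho>b: "\<rho>b j < n" "\<rho>b j \<noteq> \<rho> q" if "j < n - Suc q" for j
  proof -
    have "cb j \<in> cb ` {0..<n - Suc q}" "\<rho>b j \<in> \<rho>b ` {0..<n - Suc q}" using that by auto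
    then show "cb j < n" "cb j \<noteq> c q" "\<rho>b j < n" "\<rho>b j \<noteq> \<rho> q"
      unfolding Suc.prems(8,10) by auto
  qed
  define Z' where "Z' = mat_delete Z (\<rho> q) (c q)"
  define cb' where "cb' = (\<lambda>j. delete_index (c q) (cb j))"
  define \<rho>b' where "\<rho>b' = (\<lambda>j. delete_index (\<rho> q) (\<rho>b j))"
  have "det Z' = (-1) ^ (\<Sum>t<q. c t + \<rho> t)
      * det (mat (n' - q) (n' - q) (\<lambda>(i, j). Z' $$ (\<rho>b' i, cb' j)))"
  proof (rule Suc.IH)
    show "Z' \<in> carrier_mat n' n'"
      using Suc.prems(1) n by (auto simp: Z'_def mat_delete_def)
    show "\<forall>t<q. \<forall>i<n'. Z' $$ (i, c t) = (if i = \<rho> t then 1 else 0)"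
      unfolding Z'_def using Suc.prems(1,6) cq \<rho>q c_below \<rho>_below n
      by (intro mat_delete_unit_columns) auto
    show "strict_mono_on {0..<n' - q} cb'" "cb' ` {0..<n' - q} = {0..<n'} - c ` {0..<q}"
      unfolding cb'_def
      using enum_complement_delete_last[of q c n' "n' - q" cb] Suc.prems(3,7,8) cq n by simp_all
    show "strict_mono_on {0..<n' - q} \<rho>b'" "\<rho>b' ` {0..<n' - q} = {0..<n'} - \<rho> ` {0..<q}"
      unfolding \<rho>b'_def
      using enum_complement_delete_last[of q \<rho> n' "n' - q" \<rho>b] Suc.prems(4,9,10) \<rho>q n
      by simp_all
  qed (use Suc.prems n below_n' in \<open>auto simp: strict_mono_on_def\<close>)
  moreover have "det Z = (-1) ^ (\<rho> q + c q) * det Z'"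
    unfolding Z'_def using Suc.prems(1,6) cq \<rho>q by (intro det_unit_column) auto
  moreover have "mat (n' - q) (n' - q) (\<lambda>(i, j). Z' $$ (\<rho>b' i, cb' j))
      = mat (n - Suc q) (n - Suc q) (\<lambda>(i, j). Z $$ (\<rho>b i, cb j))"
    using Suc.prems(1) cb \<rho>b cq \<rho>q n unfolding Z'_def cb'_def \<rho>b'_def
    by (intro eq_matI) (auto intro!: index_mat_delete)
  ultimately show ?case
    by (simp add: power_add ac_simps)
qed

lemma det_identity_columns:
  fixes Y :: "'a :: comm_ring_1 mat"
  assumes "Y \<in> carrier_mat n n" "k \<le> n"
    and "strict_mono_on {0..<k} s" "\<forall>t<k. s t < n"
    and "\<forall>t<k. \<forall>i<n. Y $$ (i, s t) = (if i = s t then 1 else 0)"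
    and "strict_mono_on {0..<n - k} sb" "sb ` {0..<n - k} = {0..<n} - s ` {0..<k}"
  shows "det Y = det (mat (n - k) (n - k) (\<lambda>(i, j). Y $$ (sb i, sb j)))"
proof -
  have "(-1 :: 'a) ^ (\<Sum>t<k. s t + s t) = 1"
    by (simp add: sum_distrib_left[symmetric] power_mult flip: mult_2)
  then show ?thesis
    using det_unit_columns[of Y n k s s sb sb] assms by simp
qed

lemma column_completion:
  fixes N :: "'a :: zero_neq_one mat" and s sb rb :: "nat \<Rightarrow> nat"
  assumes s: "\<forall>t<k. s t < n" and sb: "inj_on sb {0..<m}" "sb ` {0..<m} = {0..<n} - s ` {0..<k}"
  obtains Y where "Y \<in> carrier_mat n n"
    and "\<And>t i. t < k \<Longrightarrow> i < n \<Longrightarrow> Y $$ (i, s t) = (if i = s t then 1 else 0)"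
    and "\<And>t i. t < m \<Longrightarrow> i < n \<Longrightarrow> Y $$ (i, sb t) = N $$ (i, rb t)"
proof
  define Y where "Y = mat n n (\<lambda>(i, j). if j \<in> s ` {0..<k} then (if i = j then 1 else 0)
    else N $$ (i, rb (the_inv_into {0..<m} sb j)))"
  show "Y \<in> carrier_mat n n" by (simp add: Y_def)
  show "Y $$ (i, s t) = (if i = s t then 1 else 0)" if "t < k" "i < n" for t i
    using s that by (simp add: Y_def)
  show "Y $$ (i, sb t) = N $$ (i, rb t)" if "t < m" "i < n" for t i
  proof -
    have "sb t \<in> sb ` {0..<m}" using that by simp
    then have "sb t < n" "sb t \<notin> s ` {0..<k}" unfolding sb(2) by auto
    then show ?thesis
      using that sb(1) by (simp add: Y_def the_inv_into_f_f)
  qed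
qed

lemma jacobi_complementary_minor:
  fixes M N :: "'a :: comm_ring_1 mat" and r s rb sb :: "nat \<Rightarrow> nat"
  assumes M: "M \<in> carrier_mat (k + m) (k + m)" and N: "N \<in> carrier_mat (k + m) (k + m)"
    and MN: "M * N = 1\<^sub>m (k + m)"
    and r: "strict_mono_on {0..<k} r" "\<forall>i<k. r i < k + m"
    and s: "strict_mono_on {0..<k} s" "\<forall>i<k. s i < k + m"
    and rb: "strict_mono_on {0..<m} rb" "rb ` {0..<m} = {0..<k + m} - r ` {0..<k}"
    and sb: "strict_mono_on {0..<m} sb" "sb ` {0..<m} = {0..<k + m} - s ` {0..<k}"
  shows "det (mat k k (\<lambda>(i, j). M $$ (r i, s j))) =
    (-1) ^ (\<Sum>t<m. sb t + rb t) * det M * det (mat m m (\<lambda>(i, j). N $$ (sb i, rb j)))"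
proof -
  let ?L = "k + m"
  have sb_range: "sb t < ?L" and rb_range: "rb t < ?L" if "t < m" for t
    using sb(2) rb(2) that by (auto dest!: equalityD1[THEN subsetD, OF _ imageI])
  have r_img: "r ` {0..<k} = {0..<?L} - rb ` {0..<m}" using rb(2) r(2) by auto
  have s_img: "s ` {0..<k} = {0..<?L} - sb ` {0..<m}" using sb(2) s(2) by auto
  txt \<open>\<open>M * Y\<close> agrees with \<open>M\<close> on the columns \<open>s\<close> and has the unit columns \<open>e\<^sub>r\<^sub>b\<close> at \<open>sb\<close>.\<close>
  obtain Y where Y: "Y \<in> carrier_mat ?L ?L"
    and Y_s: "\<And>t i. t < k \<Longrightarrow> i < ?L \<Longrightarrow> Y $$ (i, s t) = (if i = s t then 1 else 0)"
    and Y_sb: "\<And>t i. t < m \<Longrightarrow> i < ?L \<Longrightarrow> Y $$ (i, sb t) = N $$ (i, rb t)"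
    using column_completion[OF s(2) strict_mono_on_imp_inj_on[OF sb(1)] sb(2)] by blast
  have MY_s: "(M * Y) $$ (i, s t) = M $$ (i, s t)" if "i < ?L" "t < k" for i t
  proof -
    have "(M * Y) $$ (i, s t) = (\<Sum>u\<in>{0..<?L}. M $$ (i, u) * Y $$ (u, s t))"
      using M Y that s(2) by (simp add: scalar_prod_def)
    also have "\<dots> = (\<Sum>u\<in>{0..<?L}. if u = s t then M $$ (i, s t) else 0)"
      using that by (intro sum.cong) (auto simp: Y_s)
    finally show ?thesis using that s(2) by simp
  qed
  have MY_sb: "(M * Y) $$ (i, sb t) = (if i = rb t then 1 else 0)" if "i < ?L" "t < m" for i t
  proof -
    have "(M * Y) $$ (i, sb t) = (M * N) $$ (i, rb t)"
      using M N Y that sb_range rb_range by (simp add: Y_sb scalar_prod_def)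
    then show ?thesis using MN that rb_range by simp
  qed
  have "det (M * Y) = (-1) ^ (\<Sum>t<m. sb t + rb t) * det (mat k k (\<lambda>(i, j). M $$ (r i, s j)))"
  proof -
    have "det (M * Y) = (-1) ^ (\<Sum>t<m. sb t + rb t)
        * det (mat (?L - m) (?L - m) (\<lambda>(i, j). (M * Y) $$ (r i, s j)))"
      using M Y sb sb_range rb rb_range MY_sb r s r_img s_img by (intro det_unit_columns) auto
    also have "mat (?L - m) (?L - m) (\<lambda>(i, j). (M * Y) $$ (r i, s j))
        = mat k k (\<lambda>(i, j). M $$ (r i, s j))"
      using MY_s r(2) by (intro eq_matI) auto
    finally show ?thesis .
  qed
  moreover have "det Y = det (mat m m (\<lambda>(i, j). N $$ (sb i, rb j)))"
  proof -
    have "det Y = det (mat (?L - k) (?L - k) (\<lambda>(i, j). Y $$ (sb i, sb j)))"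
      using Y s sb by (intro det_identity_columns) (auto simp: Y_s)
    also have "mat (?L - k) (?L - k) (\<lambda>(i, j). Y $$ (sb i, sb j))
        = mat m m (\<lambda>(i, j). N $$ (sb i, rb j))"
      using sb_range by (intro eq_matI) (auto simp: Y_sb)
    finally show ?thesis .
  qed
  moreover have "det (M * Y) = det M * det Y" by (rule det_mult[OF M Y])
  ultimately have "det M * det (mat m m (\<lambda>(i, j). N $$ (sb i, rb j)))
      = (-1) ^ (\<Sum>t<m. sb t + rb t) * det (mat k k (\<lambda>(i, j). M $$ (r i, s j)))"
    by simp
  then show ?thesis
    by (simp add: mult.assoc flip: power_add mult_2)
qed

section \<open>The duality\<close>

lemma det_C_minor_duality:
  fixes r s rb sb :: "nat \<Rightarrow> nat"
  assumes "0 < k + m"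
    and r: "strict_mono_on {0..<k} r" "\<forall>i<k. r i < k + m"
    and s: "strict_mono_on {0..<k} s" "\<forall>i<k. s i < k + m"
    and rb: "strict_mono_on {0..<m} rb" "rb ` {0..<m} = {0..<k + m} - r ` {0..<k}"
    and sb: "strict_mono_on {0..<m} sb" "sb ` {0..<m} = {0..<k + m} - s ` {0..<k}"
  shows "det (mat k k (\<lambda>(i, j).
      C (2 * int (k + m) - 1) (2 * int n) (2 * int (r i)) (2 * int (s j))))
    = (-1) ^ (\<Sum>t<m. rb t + sb t) * det (mat m m (\<lambda>(i, j).
      C (2 * int (k + m) - 1) (- 2 * int n) (2 * int (rb i)) (2 * int (sb j))))"
proof -
  let ?L = "k + m"
  define M where "M = even_block ?L (path_adj (2 * ?L) ^\<^sub>m (2 * n))"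
  define N where "N = even_block ?L (path_adj_inv (2 * ?L) ^\<^sub>m (2 * n))"
  have M: "M \<in> carrier_mat ?L ?L" and N: "N \<in> carrier_mat ?L ?L"
    by (simp_all add: M_def N_def)
  have det_M: "det M = 1"
    unfolding M_def by (rule det_even_block_path_adj_pow)
  have "transpose_mat (path_adj_inv (2 * ?L)) = path_adj_inv (2 * ?L)"
    unfolding path_adj_inv_def by (rule transpose_mat_poly[OF path_adj_carrier transpose_path_adj])
  then have N_sym: "transpose_mat N = N"
    unfolding N_def by (intro transpose_even_block transpose_pow_mat) auto
  have lhs: "mat k k (\<lambda>(i, j). C (2 * int ?L - 1) (2 * int n) (2 * int (r i)) (2 * int (s j)))
      = mat k k (\<lambda>(i, j). M $$ (r i, s j))"
    using C_even_block(1)[OF assms(1)] r(2) s(2) by (intro eq_matI) (simp_all add: M_def)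
  have rhs: "mat m m (\<lambda>(i, j). C (2 * int ?L - 1) (- 2 * int n) (2 * int (rb i)) (2 * int (sb j)))
      = transpose_mat (mat m m (\<lambda>(i, j). N $$ (sb i, rb j)))"
  proof (rule eq_matI)
    fix i j assume ij: "i < dim_row (transpose_mat (mat m m (\<lambda>(i, j). N $$ (sb i, rb j))))"
      "j < dim_col (transpose_mat (mat m m (\<lambda>(i, j). N $$ (sb i, rb j))))"
    have "rb i \<in> rb ` {0..<m}" "sb j \<in> sb ` {0..<m}"
      using ij by auto
    then have "rb i < ?L" "sb j < ?L"
      unfolding rb(2) sb(2) by auto
    then show "mat m m (\<lambda>(i, j).
          C (2 * int ?L - 1) (- 2 * int n) (2 * int (rb i)) (2 * int (sb j))) $$ (i, j)
        = transpose_mat (mat m m (\<lambda>(i, j). N $$ (sb i, rb j))) $$ (i, j)"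
      using ij C_even_block(2)[OF assms(1)] arg_cong[OF N_sym, of "\<lambda>X. X $$ (rb i, sb j)"] N
      by (simp add: N_def)
  qed auto
  have "det (mat k k (\<lambda>(i, j). M $$ (r i, s j)))
      = (-1) ^ (\<Sum>t<m. sb t + rb t) * det M * det (mat m m (\<lambda>(i, j). N $$ (sb i, rb j)))"
    using M N r s rb sb unfolding M_def N_def
    by (intro jacobi_complementary_minor even_block_path_adj_pow_inverse[OF assms(1)])
  then show ?thesis
    unfolding lhs rhs det_transpose[OF mat_carrier]
    by (simp add: det_M add.commute)
qed

lemma enum_shift_to_nat:
  fixes r :: "nat \<Rightarrow> int"
  assumes "strict_mono_on {0..<k} r" "r ` {0..<k} \<subseteq> {1..int L}"
  shows "strict_mono_on {0..<k} (\<lambda>i. nat (r i - 1))" "\<forall>i<k. nat (r i - 1) < L"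
proof -
  have r_range: "1 \<le> r i \<and> r i \<le> int L" if "i < k" for i
    using assms(2) that by (auto simp: image_subset_iff)
  show "strict_mono_on {0..<k} (\<lambda>i. nat (r i - 1))"
  proof (rule strict_mono_onI)
    fix i j assume "i \<in> {0..<k}" "j \<in> {0..<k}" "i < j"
    then have "r i < r j" "1 \<le> r i"
      using assms(1) r_range by (auto simp: strict_mono_on_def)
    then show "nat (r i - 1) < nat (r j - 1)" by simp
  qed
  show "\<forall>i<k. nat (r i - 1) < L"
  proof (intro allI impI)
    fix i assume "i < k"
    then show "nat (r i - 1) < L" using r_range[of i] by linarith
  qed
qed

lemma image_shift_to_nat:
  fixes r rb :: "nat \<Rightarrow> int"
  assumes "rb ` {0..<m} = {1..int L} - r ` {0..<k}" "r ` {0..<k} \<subseteq> {1..int L}"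
  shows "(\<lambda>i. nat (rb i - 1)) ` {0..<m} = {0..<L} - (\<lambda>i. nat (r i - 1)) ` {0..<k}"
proof -
  let ?f = "\<lambda>x :: int. nat (x - 1)"
  have inj: "inj_on ?f {1..int L}" by (auto simp: inj_on_def)
  have "?f ` {1..int L} = {0..<L}"
    by (auto simp: image_iff intro!: bexI[of _ "int _ + 1"])
  then have "?f ` ({1..int L} - r ` {0..<k}) = {0..<L} - ?f ` r ` {0..<k}"
    using inj_on_image_set_diff[OF inj _ assms(2)] by simp
  then show ?thesis
    unfolding assms(1)[symmetric] by (simp add: image_image)
qed

lemma mat_C_shift_to_nat:
  fixes r s :: "nat \<Rightarrow> int"
  assumes "\<forall>i<p. 1 \<le> r i \<and> 1 \<le> s i"
  shows "mat p p (\<lambda>(i, j). C K N (2 * r i - 2) (2 * s j - 2))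
    = mat p p (\<lambda>(i, j). C K N (2 * int (nat (r i - 1))) (2 * int (nat (s j - 1))))"
  using assms by (intro eq_matI) (auto simp: algebra_simps)

lemma nat_sum_shift_to_nat:
  fixes r s :: "nat \<Rightarrow> int"
  assumes "\<forall>i<p. 1 \<le> r i \<and> 1 \<le> s i"
  shows "nat (\<Sum>i<p. r i + s i) = (\<Sum>i<p. nat (r i - 1) + nat (s i - 1)) + 2 * p"
proof -
  have "(\<Sum>i<p. r i + s i) = (\<Sum>i<p. int (nat (r i - 1) + nat (s i - 1)) + 2)"
    using assms by (intro sum.cong) auto
  also have "\<dots> = int ((\<Sum>i<p. nat (r i - 1) + nat (s i - 1)) + 2 * p)"
    by (simp only: sum.distrib of_nat_sum of_nat_add) simp
  finally show ?thesis by (simp only: nat_int)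
qed

theorem theorem21:
  fixes n k m :: nat and r s rb sb :: "nat \<Rightarrow> int"
  assumes "k \<ge> 1" and "m \<ge> 1"
    and "strict_mono_on {0..<k} r" and "strict_mono_on {0..<k} s"
    and "r ` {0..<k} \<subseteq> {1..int (k + m)}" and "s ` {0..<k} \<subseteq> {1..int (k + m)}"
    and "strict_mono_on {0..<m} rb" and "strict_mono_on {0..<m} sb"
    and "rb ` {0..<m} = {1..int (k + m)} - r ` {0..<k}"
    and "sb ` {0..<m} = {1..int (k + m)} - s ` {0..<k}"
  shows "det (mat k k (\<lambda>(i, j). C (2 * int k + 2 * int m - 1) (2 * int n) (2 * r i - 2) (2 * s j - 2)))
       = (-1) ^ nat (\<Sum>i<m. rb i + sb i) *
         det (mat m m (\<lambda>(i, j). C (2 * int k + 2 * int m - 1) (- 2 * int n) (2 * rb i - 2) (2 * sb j - 2)))"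
proof -
  have rb_sub: "rb ` {0..<m} \<subseteq> {1..int (k + m)}" and sb_sub: "sb ` {0..<m} \<subseteq> {1..int (k + m)}"
    using assms(9,10) by auto
  then have pos: "\<forall>i<k. 1 \<le> r i \<and> 1 \<le> s i" "\<forall>i<m. 1 \<le> rb i \<and> 1 \<le> sb i"
    using assms(5,6) by (auto simp: image_subset_iff)
  have K: "2 * int k + 2 * int m - 1 = 2 * int (k + m) - 1" by simp
  show ?thesis
    unfolding K mat_C_shift_to_nat[OF pos(1)] mat_C_shift_to_nat[OF pos(2)]
      nat_sum_shift_to_nat[OF pos(2)] power_add power_mult
    using det_C_minor_duality[of k m "\<lambda>i. nat (r i - 1)" "\<lambda>i. nat (s i - 1)"
        "\<lambda>i. nat (rb i - 1)" "\<lambda>i. nat (sb i - 1)" n]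
      assms(1) enum_shift_to_nat[OF assms(3,5)] enum_shift_to_nat[OF assms(4,6)]
      enum_shift_to_nat[OF assms(7) rb_sub] enum_shift_to_nat[OF assms(8) sb_sub]
      image_shift_to_nat[OF assms(9,5)] image_shift_to_nat[OF assms(10,6)]
    by simp
qed

end
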